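(* Assume the standing setup below, and let $i$ be an integer with $0\le i\le s-2r+1$. Then, as subspaces of the space of linear forms over $\mathbb{F}_p$ in $x_1,\ldots,x_m$, \[ \Big\langle L_H : H\in \textstyle\bigcup_{j=i}^{i+2r-1}\mathbb{P}_j(X)\Big\rangle =\Big\langle L_H : H\in \textstyle\bigcup_{j=i}^{i+2r-1}\mathbb{P}_j(X)\Big\rangle+\Big\langle \sum_{H\in\mathbb{P}_{i+2r}(X),\,I\subseteq H} L_H : I\in \mathbb{P}_i(X)\Big\rangle, \] where $\langle S\rangle$ denotes the $\mathbb{F}_p$-span of $S$.
   Context: Standing setup: $p$ is a prime; $K=\{k_1,\ldots,k_r\}$ and $L=\{l_1,\ldots,l_s\}$ are disjoint subsets of $\{0,1,\ldots,p-1\}$; $\mathcal{A}=\{A_1,\ldots,A_m\}$ is a family of distinct subsets of $[n]$ with $|A_i|\pmod p\in K$ for all $i$ and $|A_i\cap A_j|\pmod p\in L$ for all $i\ne j$. Let $X=[n-1]$. Associate a variable $x_i$ to each $A_i$, and for each $I\subseteq X$ define the linear form over $\mathbb{F}_p$: $L_I=\sum_{i:\ I\subseteq A_i} x_i$. For $j\ge0$, $\mathbb{P}_j(X)$ is the set of $j$-element subsets of $X$. *)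

theory Defs
  imports Complex_Main "HOL-Library.Function_Algebras" "HOL-Computational_Algebra.Primes"
begin

text \<open>Linear forms over the field F (of prime order p) in the variables x_0,...,x_{m-1}
  are represented by their coefficient vectors nat => F (coefficients outside {..<m} are 0).\<close>

definition fscale :: "'a::field \<Rightarrow> (nat \<Rightarrow> 'a) \<Rightarrow> (nat \<Rightarrow> 'a)" where
  "fscale c f = (\<lambda>k. c * f k)"

abbreviation fspan :: "(nat \<Rightarrow> 'a::field) set \<Rightarrow> (nat \<Rightarrow> 'a) set" where
  "fspan S \<equiv> module.span fscale S"

definition LI :: "(nat \<Rightarrow> nat set) \<Rightarrow> nat \<Rightarrow> nat set \<Rightarrow> (nat \<Rightarrow> 'a::field)" where
  "LI A m I = (\<lambda>k. if k < m \<and> I \<subseteq> A k then 1 else 0)"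

definition Pj :: "nat \<Rightarrow> nat set \<Rightarrow> nat set set" where
  "Pj j X = {H. H \<subseteq> X \<and> card H = j}"

end

theory Submission
  imports Defs "HOL-Number_Theory.Residues"
begin

text \<open>Fix \<open>I \<in> P\<^sub>i(X)\<close> and write \<open>W\<^sub>j = \<Sum>{L\<^sub>H : I \<subseteq> H \<in> P\<^sub>i\<^sub>+\<^sub>j(X)}\<close>. The \<open>k\<close>-th
  coefficient of \<open>W\<^sub>j\<close> is \<open>(t\<^sub>k choose j)\<close> with \<open>t\<^sub>k = |A\<^sub>k \<inter> X| - i\<close> (or \<open>0\<close> if \<open>I \<subseteq> A\<^sub>k\<close> fails),
  and since \<open>X\<close> misses only the point \<open>n\<close>, modulo \<open>p\<close> every \<open>t\<^sub>k\<close> is one of the \<open>2r\<close> numbers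
  \<open>\<kappa> - i\<close>, \<open>\<kappa> - 1 - i\<close> (\<open>\<kappa> \<in> K\<close>). Expanding \<open>\<Prod>(t - \<kappa> + i)(t - \<kappa> + 1 + i)\<close> in the binomial basis
  \<open>(t choose j)\<close> gives a linear relation among \<open>W\<^sub>0, \<dots>, W\<^sub>2\<^sub>r\<close> whose top coefficient is
  \<open>(2r)!\<close>, a unit when \<open>2r < p\<close>; so \<open>W\<^sub>2\<^sub>r\<close> lies in the span of the lower levels.
  As \<open>r + s \<le> p\<close> and \<open>i \<le> s - 2r + 1\<close>, the only other case is \<open>p = 2\<close>, \<open>r = s = 1\<close>, \<open>i = 0\<close>;
  there the forms \<open>L\<^sub>\<emptyset>\<close> and \<open>L\<^sub>{\<^sub>j\<^sub>}\<close> already span every coordinate vector.\<close>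

interpretation fscale: Modules.module "fscale :: 'a::field \<Rightarrow> (nat \<Rightarrow> 'a) \<Rightarrow> nat \<Rightarrow> 'a"
  by unfold_locales (auto simp: fscale_def algebra_simps)

lemma sum_fun_apply: "sum f S k = (\<Sum>x\<in>S. f x k)"
  by (induction S rule: infinite_finite_induct) auto

lemma fspan_eq_plus_fspan:
  assumes "fspan T \<subseteq> fspan S"
  shows "fspan S = {(\<lambda>k. u k + v k) | u v. u \<in> fspan S \<and> v \<in> fspan T}"
proof (intro equalityI subsetI)
  fix x assume "x \<in> fspan S"
  moreover have "x = (\<lambda>k. x k + (0 :: nat \<Rightarrow> 'a) k)" by simp
  ultimately show "x \<in> {(\<lambda>k. u k + v k) | u v. u \<in> fspan S \<and> v \<in> fspan T}"
    using fscale.span_zero by blast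
next
  fix x assume "x \<in> {(\<lambda>k. u k + v k) | u v. u \<in> fspan S \<and> v \<in> fspan T}"
  then obtain u v where "x = u + v" "u \<in> fspan S" "v \<in> fspan T" by (auto simp: plus_fun_def)
  then show "x \<in> fspan S" using assms fscale.span_add by blast
qed

lemma in_fspan_of_linear_relation:
  fixes W :: "nat \<Rightarrow> nat \<Rightarrow> 'a::field"
  assumes "c d \<noteq> 0" "\<And>k. (\<Sum>j<d. c j * W j k) + c d * W d k = 0"
    and "\<And>j. j < d \<Longrightarrow> W j \<in> fspan S"
  shows "W d \<in> fspan S"
proof -
  have "W d = (\<Sum>j<d. fscale (- c j / c d) (W j))"
  proof
    fix k
    from assms(1) assms(2)[of k] have "W d k = - (\<Sum>j<d. c j * W j k) / c d"
      by (simp add: eq_divide_eq add_eq_0_iff2 mult.commute)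
    also have "\<dots> = (\<Sum>j<d. - c j / c d * W j k)"
      by (simp add: sum_divide_distrib sum_negf)
    finally show "W d k = (\<Sum>j<d. fscale (- c j / c d) (W j)) k"
      by (simp add: sum_fun_apply fscale_def)
  qed
  also have "\<dots> \<in> fspan S"
    using assms(3) by (intro fscale.span_sum fscale.span_scale) simp
  finally show ?thesis .
qed

lemma CHAR_eq_prime_card:
  assumes "prime p" "card (UNIV :: 'a::{field,finite} set) = p"
  shows "CHAR('a) = p"
  using CHAR_dvd_CARD[where 'a='a] CHAR_not_1'[where 'a='a] assms prime_nat_iff by auto

lemma of_nat_mod_CHAR: "(of_nat (x mod CHAR('a)) :: 'a::semiring_1_cancel) = of_nat x"
  by (simp add: of_nat_eq_iff_cong_CHAR cong_def)

lemma of_nat_diff_mult_binomial: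
  "(of_nat t - w) * of_nat (t choose j) =
     (of_nat j - w) * of_nat (t choose j) + of_nat (Suc j) * (of_nat (t choose Suc j) :: 'a::comm_ring_1)"
proof -
  have "Suc t * (t choose j) = Suc j * (t choose j) + Suc j * (t choose Suc j)"
    using Suc_times_binomial_eq[of t j] by (simp add: algebra_simps)
  then have "t * (t choose j) = j * (t choose j) + Suc j * (t choose Suc j)" by simp
  from arg_cong[OF this, of "of_nat :: nat \<Rightarrow> 'a"] show ?thesis
    by (simp add: algebra_simps)
qed

lemma prod_list_in_binomial_basis:
  fixes ws :: "'a::comm_ring_1 list"
  shows "\<exists>c. c (length ws) = of_nat (fact (length ws)) \<and>
     (\<forall>t. (\<Prod>a\<leftarrow>ws. of_nat t - a) = (\<Sum>j\<le>length ws. c j * of_nat (t choose j)))"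
proof (induction ws)
  case Nil
  show ?case by (rule exI[of _ "\<lambda>_. 1"]) simp
next
  case (Cons w ws)
  define d where "d = length ws"
  obtain c :: "nat \<Rightarrow> 'a" where c_top: "c d = of_nat (fact d)"
    and c_expand: "\<And>t. (\<Prod>a\<leftarrow>ws. of_nat t - a) = (\<Sum>j\<le>d. c j * of_nat (t choose j))"
    using Cons d_def by blast
  define c' where "c' j = (if j \<le> d then c j * (of_nat j - w) else 0)
      + (if 0 < j then c (j - 1) * of_nat j else 0)" for j
  have "(\<Prod>a\<leftarrow>w # ws. of_nat t - a) = (\<Sum>j\<le>Suc d. c' j * of_nat (t choose j))" for t
  proof -
    have "(\<Prod>a\<leftarrow>w # ws. of_nat t - a) = (\<Sum>j\<le>d. c j * ((of_nat t - w) * of_nat (t choose j)))"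
      by (simp add: c_expand sum_distrib_left algebra_simps)
    also have "\<dots> = (\<Sum>j\<le>d. c j * (of_nat j - w) * of_nat (t choose j))
        + (\<Sum>j\<le>d. c j * of_nat (Suc j) * of_nat (t choose Suc j))"
      by (simp only: of_nat_diff_mult_binomial distrib_left sum.distrib mult.assoc)
    also have "(\<Sum>j\<le>d. c j * of_nat (Suc j) * of_nat (t choose Suc j))
        = (\<Sum>j\<le>Suc d. (if 0 < j then c (j - 1) * of_nat j else 0) * of_nat (t choose j))"
      by (subst sum.atMost_Suc_shift) simp
    finally show ?thesis
      by (simp add: c'_def sum.distrib algebra_simps)
  qed
  moreover have "c' (Suc d) = of_nat (fact (Suc d))"
    using c_top by (simp add: c'_def algebra_simps)
  ultimately show ?case by (intro exI[of _ c']) (simp add: d_def)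
qed

definition LI_up :: "(nat \<Rightarrow> nat set) \<Rightarrow> nat \<Rightarrow> nat set \<Rightarrow> nat \<Rightarrow> nat set \<Rightarrow> nat \<Rightarrow> 'a::field" where
  "LI_up A m X l I = (\<lambda>k. \<Sum>H\<in>{H \<in> Pj l X. I \<subseteq> H}. LI A m H k)"

lemma finite_Pj: "finite X \<Longrightarrow> finite (Pj j X)"
  unfolding Pj_def by (rule finite_subset[of _ "Pow X"]) auto

lemma card_supersets_of_card:
  assumes "finite B" "I \<subseteq> B"
  shows "card {H. H \<subseteq> B \<and> card H = card I + j \<and> I \<subseteq> H} = (card B - card I) choose j"
proof -
  have fin_I: "finite I" using assms finite_subset by blast
  have "bij_betw (\<lambda>D. D \<union> I) {D. D \<subseteq> B - I \<and> card D = j}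
      {H. H \<subseteq> B \<and> card H = card I + j \<and> I \<subseteq> H}"
  proof (rule bij_betwI[where g="\<lambda>H. H - I"])
    show "(\<lambda>D. D \<union> I) \<in> {D. D \<subseteq> B - I \<and> card D = j} \<rightarrow> {H. H \<subseteq> B \<and> card H = card I + j \<and> I \<subseteq> H}"
    proof
      fix D assume D: "D \<in> {D. D \<subseteq> B - I \<and> card D = j}"
      then have "finite D" "D \<inter> I = {}" using assms(1) finite_subset by blast+
      with D fin_I assms(2) show "D \<union> I \<in> {H. H \<subseteq> B \<and> card H = card I + j \<and> I \<subseteq> H}"
        by (auto simp: card_Un_disjoint)
    qed
  qed (use fin_I in \<open>auto simp: card_Diff_subset\<close>)
  then have "card {H. H \<subseteq> B \<and> card H = card I + j \<and> I \<subseteq> H} = card {D. D \<subseteq> B - I \<and> card D = j}"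
    by (simp add: bij_betw_same_card)
  also have "\<dots> = card (B - I) choose j" using assms by (simp add: n_subsets)
  finally show ?thesis using assms fin_I by (simp add: card_Diff_subset)
qed

lemma LI_up_apply:
  assumes "finite X" "I \<in> Pj i X"
  shows "LI_up A m X (i + j) I k =
    (if k < m \<and> I \<subseteq> A k then of_nat ((card (A k \<inter> X) - i) choose j) else 0)"
proof -
  have "LI_up A m X (i + j) I k =
      of_nat (card ({H \<in> Pj (i + j) X. I \<subseteq> H} \<inter> {H. k < m \<and> H \<subseteq> A k}))"
    using finite_Pj[OF assms(1)] by (simp add: LI_up_def LI_def flip: of_bool_def)
  also have "{H \<in> Pj (i + j) X. I \<subseteq> H} \<inter> {H. k < m \<and> H \<subseteq> A k} =
      (if k < m \<and> I \<subseteq> A k then {H. H \<subseteq> A k \<inter> X \<and> card H = card I + j \<and> I \<subseteq> H} else {})"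
    using assms(2) by (auto simp: Pj_def)
  moreover have "I \<subseteq> X" "card I = i" using assms(2) by (auto simp: Pj_def)
  ultimately show ?thesis
    using assms(1) card_supersets_of_card[of "A k \<inter> X" I j] by (cases "k < m \<and> I \<subseteq> A k") auto
qed

lemma LI_up_beyond: "m \<le> k \<Longrightarrow> LI_up A m X l I k = 0"
  by (simp add: LI_up_def LI_def)

lemma LI_up_in_fspan_level: "LI_up A m X l I \<in> fspan (LI A m ` Pj l X)"
proof -
  have "LI_up A m X l I = (\<Sum>H\<in>{H \<in> Pj l X. I \<subseteq> H}. LI A m H)"
    by (simp add: LI_up_def fun_eq_iff sum_fun_apply)
  also have "\<dots> \<in> fspan (LI A m ` Pj l X)"
    by (intro fscale.span_sum fscale.span_base) auto
  finally show ?thesis .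
qed

lemma LI_up_in_fspan_lower_levels:
  fixes ws :: "'a::field list"
  assumes "finite X" and I: "I \<in> Pj i X"
    and roots: "\<And>k. k < m \<Longrightarrow> I \<subseteq> A k \<Longrightarrow> of_nat (card (A k \<inter> X) - i) \<in> set ws"
    and "(of_nat (fact (length ws)) :: 'a) \<noteq> 0"
  shows "(LI_up A m X (i + length ws) I :: nat \<Rightarrow> 'a) \<in> fspan (LI A m ` (\<Union>j\<in>{i..<i + length ws}. Pj j X))"
proof -
  define d where "d = length ws"
  define W :: "nat \<Rightarrow> nat \<Rightarrow> 'a" where "W j = LI_up A m X (i + j) I" for j
  obtain c :: "nat \<Rightarrow> 'a" where "c d = of_nat (fact d)"
    and c_expand: "\<And>t. (\<Prod>a\<leftarrow>ws. of_nat t - a) = (\<Sum>j\<le>d. c j * of_nat (t choose j))"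
    using prod_list_in_binomial_basis[of ws] d_def by blast
  with assms(4) have "c d \<noteq> 0" by (simp add: d_def)
  moreover have "(\<Sum>j<d. c j * W j k) + c d * W d k = 0" for k
  proof (cases "k < m \<and> I \<subseteq> A k")
    case True
    then have "(\<Prod>a\<leftarrow>ws. of_nat (card (A k \<inter> X) - i) - a) = 0"
      using roots by (auto simp: prod_list_zero_iff)
    then show ?thesis
      using True c_expand by (simp add: W_def LI_up_apply[OF assms(1) I] lessThan_Suc_atMost[symmetric])
  next
    case False
    then have "W j k = 0" for j by (auto simp: W_def LI_up_apply[OF assms(1) I])
    then show ?thesis by simp
  qed
  moreover have "W j \<in> fspan (LI A m ` (\<Union>j\<in>{i..<i + d}. Pj j X))" if "j < d" for j
  proof -
    have "Pj (i + j) X \<subseteq> (\<Union>j\<in>{i..<i + d}. Pj j X)" using that by (intro UN_upper) simp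
    then have "LI A m ` Pj (i + j) X \<subseteq> LI A m ` (\<Union>j\<in>{i..<i + d}. Pj j X)" by (rule image_mono)
    from fscale.span_mono[OF this] show ?thesis
      unfolding W_def using LI_up_in_fspan_level[of A m X "i + j" I] by (rule subsetD)
  qed
  ultimately have "W d \<in> fspan (LI A m ` (\<Union>j\<in>{i..<i + d}. Pj j X))"
    by (rule in_fspan_of_linear_relation)
  then show ?thesis unfolding W_def d_def .
qed

lemma card_split_off_point:
  assumes "finite X" "B \<subseteq> insert n X" "n \<notin> X"
  shows "card B = card (B \<inter> X) + of_bool (n \<in> B)"
proof -
  have "finite B" using assms(1,2) finite_subset by blast
  moreover have "B \<inter> X = B - {n}" using assms(2,3) by blast
  ultimately show ?thesis using card.remove[of B n] by (cases "n \<in> B") simp_all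
qed

lemma LI_up_in_fspan_lower_levels_mod_p:
  fixes A :: "nat \<Rightarrow> nat set"
  assumes "CHAR('a::field) = p" "prime p" "2 * card K < p" "finite K" "finite X"
    and I: "I \<in> Pj i X"
    and card_mod: "\<And>k. k < m \<Longrightarrow> card (A k) mod p \<in> K"
    and "n \<notin> X" and A_sub: "\<And>k. k < m \<Longrightarrow> A k \<subseteq> insert n X"
  shows "(LI_up A m X (i + 2 * card K) I :: nat \<Rightarrow> 'a)
    \<in> fspan (LI A m ` (\<Union>j\<in>{i..<i + 2 * card K}. Pj j X))"
proof -
  define xs where "xs = sorted_list_of_set K"
  define ws :: "'a list" where
    "ws = map (\<lambda>\<kappa>. of_nat \<kappa> - of_nat i) xs @ map (\<lambda>\<kappa>. of_nat \<kappa> - 1 - of_nat i) xs"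
  have "of_nat (card (A k \<inter> X) - i) \<in> set ws" if "k < m" "I \<subseteq> A k" for k
  proof -
    have "card I \<le> card (A k \<inter> X)"
      using I that(2) \<open>finite X\<close> by (intro card_mono) (auto simp: Pj_def)
    then have t: "(of_nat (card (A k \<inter> X) - i) :: 'a) = of_nat (card (A k \<inter> X)) - of_nat i"
      using I by (simp add: Pj_def of_nat_diff)
    define \<kappa> where "\<kappa> = card (A k) mod p"
    have \<kappa>_in: "\<kappa> \<in> set xs" using card_mod[OF that(1)] \<open>finite K\<close> by (simp add: xs_def \<kappa>_def)
    have \<kappa>_eq: "(of_nat \<kappa> :: 'a) = of_nat (card (A k))"
      using of_nat_mod_CHAR[where 'a='a] assms(1) by (simp add: \<kappa>_def)
    show ?thesis
      using card_split_off_point[OF \<open>finite X\<close> A_sub[OF that(1)] \<open>n \<notin> X\<close>] \<kappa>_eq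
      unfolding ws_def t by (cases "n \<in> A k") (auto intro!: rev_image_eqI[OF \<kappa>_in])
  qed
  moreover have "(of_nat (fact (2 * card K)) :: 'a) \<noteq> 0"
    using assms(1-3) by (simp add: of_nat_eq_0_iff_char_dvd prime_dvd_fact_iff)
  moreover have "length ws = 2 * card K" by (simp add: ws_def xs_def)
  ultimately show ?thesis
    using LI_up_in_fspan_lower_levels[OF \<open>finite X\<close> I, of m A ws] by simp
qed

subsection \<open>The case of characteristic two\<close>

lemma sum_LI_singletons_apply:
  assumes "finite B" "k < m"
  shows "(\<Sum>j\<in>B. LI A m {j}) k = (of_nat (card (B \<inter> A k)) :: 'a::field)"
  using assms by (simp add: sum_fun_apply LI_def flip: of_bool_def)

lemma in_fspan_of_unit_forms:
  fixes g :: "nat \<Rightarrow> 'a::field"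
  assumes "\<And>l. l < m \<Longrightarrow> (\<lambda>k. of_bool (k = l)) \<in> fspan S"
    and "\<And>k. m \<le> k \<Longrightarrow> g k = 0"
  shows "g \<in> fspan S"
proof -
  have "g = (\<Sum>l<m. fscale (g l) (\<lambda>k. of_bool (k = l)))"
  proof
    fix k
    show "g k = (\<Sum>l<m. fscale (g l) (\<lambda>k. of_bool (k = l))) k"
      using assms(2)[of k] by (cases "k < m") (simp_all add: sum_fun_apply fscale_def)
  qed
  also have "\<dots> \<in> fspan S"
    using assms(1) by (intro fscale.span_sum fscale.span_scale) auto
  finally show ?thesis .
qed

lemma CHAR_2_add_self: "CHAR('a::ring_1) = 2 \<Longrightarrow> (x :: 'a) + x = 0"
  using of_nat_CHAR[where 'a='a] by (metis mult_2 mult_zero_left of_nat_numeral)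

text \<open>In characteristic two the \<open>k\<close>-th coefficient of this combination is \<open>|A\<^sub>l \<inter> A\<^sub>k|\<close>: the
  coefficient \<open>\<kappa> + |X \<inter> A\<^sub>k|\<close> of the bracket equals \<open>[n \<in> A\<^sub>k]\<close>, so the correction term
  supplies the point \<open>n \<notin> X\<close>.\<close>

lemma LI_singletons_combination_char_2:
  fixes A :: "nat \<Rightarrow> nat set"
  assumes "CHAR('a::field) = 2" "finite X" "n \<notin> X" "k < m"
    and "A l \<subseteq> insert n X" "A k \<subseteq> insert n X" "card (A k) mod 2 = \<kappa>"
  shows "((\<Sum>j\<in>A l \<inter> X. LI A m {j})
      + fscale (of_bool (n \<in> A l)) (fscale (of_nat \<kappa>) (LI A m {}) + (\<Sum>j\<in>X. LI A m {j}))) k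
    = (of_nat (card (A l \<inter> A k)) :: 'a)"
proof -
  have "(of_nat \<kappa> :: 'a) = of_nat (card (A k))"
    using of_nat_mod_CHAR[where 'a='a, of "card (A k)"] assms(1,7) by simp
  also have "\<dots> = of_nat (card (X \<inter> A k)) + of_bool (n \<in> A k)"
    using card_split_off_point[OF assms(2,6,3)] by (simp add: Int_commute)
  finally have "of_nat \<kappa> + of_nat (card (X \<inter> A k))
      = of_bool (n \<in> A k) + (of_nat (card (X \<inter> A k)) + (of_nat (card (X \<inter> A k)) :: 'a))"
    by (simp add: algebra_simps)
  then have "of_nat \<kappa> + of_nat (card (X \<inter> A k)) = (of_bool (n \<in> A k) :: 'a)"
    by (simp only: CHAR_2_add_self[OF assms(1)] add_0_right)
  moreover have "card (A l \<inter> A k) = card (A l \<inter> A k \<inter> X) + of_bool (n \<in> A l \<inter> A k)"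
    using assms(5) by (intro card_split_off_point[OF assms(2) _ assms(3)]) blast
  moreover have "LI A m {} k = (1 :: 'a)" using assms(4) by (simp add: LI_def)
  ultimately show ?thesis
    using assms(2,4) by (simp add: fscale_def sum_LI_singletons_apply distrib_left Int_ac of_bool_conj)
qed

lemma unit_form_in_fspan_char_2:
  fixes A :: "nat \<Rightarrow> nat set"
  assumes "CHAR('a::field) = 2" "finite X" "n \<notin> X" "l < m"
    and A_sub: "\<And>k. k < m \<Longrightarrow> A k \<subseteq> insert n X"
    and card_A: "\<And>k. k < m \<Longrightarrow> card (A k) mod 2 = \<kappa>"
    and card_inter: "\<And>k. k < m \<Longrightarrow> k \<noteq> l \<Longrightarrow> card (A l \<inter> A k) mod 2 = \<mu>"
    and "\<kappa> + \<mu> = 1"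
  shows "(\<lambda>k. of_bool (k = l) :: 'a) \<in> fspan (LI A m ` insert {} ((\<lambda>j. {j}) ` X))"
proof -
  define R :: "nat \<Rightarrow> 'a" where "R = (\<Sum>j\<in>A l \<inter> X. LI A m {j})
      + fscale (of_bool (n \<in> A l)) (fscale (of_nat \<kappa>) (LI A m {}) + (\<Sum>j\<in>X. LI A m {j}))
      + fscale (of_nat \<mu>) (LI A m {})"
  have R_in: "R \<in> fspan (LI A m ` insert {} ((\<lambda>j. {j}) ` X))"
    unfolding R_def by (intro fscale.span_add fscale.span_scale fscale.span_sum fscale.span_base) auto
  have "R k = of_bool (k = l)" for k
  proof (cases "k < m")
    case True
    then have "R k = of_nat (card (A l \<inter> A k)) + of_nat \<mu>"
      using LI_singletons_combination_char_2[OF assms(1-3) True A_sub[OF assms(4)] A_sub[OF True] card_A[OF True]]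
      by (simp add: R_def fscale_def LI_def)
    also have "\<dots> = of_nat (card (A l \<inter> A k) mod 2 + \<mu>)"
      using of_nat_mod_CHAR[where 'a='a] assms(1) by simp
    also have "\<dots> = of_bool (k = l)"
      using card_A[OF assms(4)] card_inter[OF True] \<open>\<kappa> + \<mu> = 1\<close> CHAR_2_add_self[OF assms(1)]
      by (cases "k = l") simp_all
    finally show ?thesis .
  next
    case False
    then show ?thesis using assms(4) by (simp add: R_def fscale_def sum_fun_apply LI_def)
  qed
  then have "R = (\<lambda>k. of_bool (k = l))" ..
  with R_in show ?thesis by simp
qed

lemma in_fspan_LI_levels_0_1_char_2:
  fixes A :: "nat \<Rightarrow> nat set" and g :: "nat \<Rightarrow> 'a::field"
  assumes "CHAR('a) = 2" "finite X" "n \<notin> X"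
    and "\<And>k. k < m \<Longrightarrow> A k \<subseteq> insert n X"
    and "\<And>k. k < m \<Longrightarrow> card (A k) mod 2 = \<kappa>"
    and "\<And>k l. k < m \<Longrightarrow> l < m \<Longrightarrow> k \<noteq> l \<Longrightarrow> card (A k \<inter> A l) mod 2 = \<mu>"
    and "\<kappa> + \<mu> = 1" "\<And>k. m \<le> k \<Longrightarrow> g k = 0"
  shows "g \<in> fspan (LI A m ` (Pj 0 X \<union> Pj 1 X))"
proof -
  have levels: "Pj 0 X \<union> Pj 1 X = insert {} ((\<lambda>j. {j}) ` X)"
    using \<open>finite X\<close> by (auto simp: Pj_def card_1_singleton_iff card_eq_0_iff dest: rev_finite_subset)
  show ?thesis unfolding levels
  proof (rule in_fspan_of_unit_forms)
    fix l assume "l < m"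
    then show "(\<lambda>k. of_bool (k = l) :: 'a) \<in> fspan (LI A m ` insert {} ((\<lambda>j. {j}) ` X))"
      using assms by (intro unit_form_in_fspan_char_2[where \<kappa> = \<kappa> and \<mu> = \<mu>]) auto
  qed (rule assms(8))
qed

lemma double_card_ge_prime_cases:
  assumes "prime p" "K \<subseteq> {0..<p}" "L \<subseteq> {0..<p}" "K \<inter> L = {}"
    and "int i \<le> int (card L) - 2 * int (card K) + 1" "p \<le> 2 * card K"
  shows "p = 2 \<and> i = 0 \<and> card K = 1 \<and> (\<exists>\<kappa> \<mu>. K = {\<kappa>} \<and> L = {\<mu>} \<and> \<kappa> + \<mu> = 1)"
proof -
  have "finite K" "finite L" using assms(2,3) finite_subset by blast+
  then have "card K + card L \<le> p"
    using assms(2-4) card_mono[of "{0..<p}" "K \<union> L"] by (simp add: card_Un_disjoint)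
  with assms(5,6) prime_ge_2_nat[OF assms(1)] have "p = 2" "i = 0" "card K = 1" "card L = 1"
    by linarith+
  moreover obtain \<kappa> \<mu> where "K = {\<kappa>}" "L = {\<mu>}"
    using \<open>card K = 1\<close> \<open>card L = 1\<close> by (meson card_1_singletonE)
  moreover have "\<kappa> + \<mu> = 1" using assms(2-4) calculation by auto
  ultimately show ?thesis by blast
qed

theorem mainTheorem5:
  fixes p n m i :: nat and K L :: "nat set" and A :: "nat \<Rightarrow> nat set"
  assumes "prime p" and "card (UNIV :: 'a::{field,finite} set) = p"
    and "K \<subseteq> {0..<p}" and "L \<subseteq> {0..<p}" and "K \<inter> L = {}"
    and "inj_on A {..<m}"
    and "\<And>k. k < m \<Longrightarrow> A k \<subseteq> {1..n}"
    and "\<And>k. k < m \<Longrightarrow> card (A k) mod p \<in> K"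
    and "\<And>k l. k < m \<Longrightarrow> l < m \<Longrightarrow> k \<noteq> l \<Longrightarrow> card (A k \<inter> A l) mod p \<in> L"
    and "int i \<le> int (card L) - 2 * int (card K) + 1"
  shows "(fspan ((LI A m :: nat set \<Rightarrow> nat \<Rightarrow> 'a::{field,finite}) `
             (\<Union>j\<in>{i..<i + 2 * card K}. Pj j {1..n-1})))
       = {(\<lambda>k. u k + v k) | u v.
            u \<in> fspan ((LI A m :: nat set \<Rightarrow> nat \<Rightarrow> 'a::{field,finite}) `
                    (\<Union>j\<in>{i..<i + 2 * card K}. Pj j {1..n-1}))
          \<and> v \<in> fspan ((\<lambda>I. (\<lambda>k. \<Sum>H\<in>{H \<in> Pj (i + 2 * card K) {1..n-1}. I \<subseteq> H}.
                                   (LI A m H :: nat \<Rightarrow> 'a) k))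
                         ` Pj i {1..n-1})}"
proof -
  define X where "X = {1..n-1}"
  define lower :: "(nat \<Rightarrow> 'a) set" where "lower = LI A m ` (\<Union>j\<in>{i..<i + 2 * card K}. Pj j X)"
  have "finite X" "n \<notin> X" and A_sub: "\<And>k. k < m \<Longrightarrow> A k \<subseteq> insert n X"
    using assms(7) by (fastforce simp: X_def)+
  have char: "CHAR('a) = p" using CHAR_eq_prime_card[OF assms(1,2)] .
  have "LI_up A m X (i + 2 * card K) I \<in> fspan lower" if I: "I \<in> Pj i X" for I
  proof (cases "2 * card K < p")
    case True
    have "finite K" using assms(3) finite_subset by blast
    then show ?thesis unfolding lower_def
      by (rule LI_up_in_fspan_lower_levels_mod_p[OF char assms(1) True _ \<open>finite X\<close> I])
        (use assms(8) A_sub \<open>n \<notin> X\<close> in auto)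
  next
    case False
    then obtain \<kappa> \<mu> where "p = 2" "i = 0" "card K = 1" "K = {\<kappa>}" "L = {\<mu>}" "\<kappa> + \<mu> = 1"
      using double_card_ge_prime_cases[OF assms(1,3,4,5,10)] by auto
    have "(LI_up A m X (i + 2 * card K) I :: nat \<Rightarrow> 'a) \<in> fspan (LI A m ` (Pj 0 X \<union> Pj 1 X))"
      by (rule in_fspan_LI_levels_0_1_char_2[where \<kappa> = \<kappa> and \<mu> = \<mu>])
        (use char A_sub \<open>finite X\<close> \<open>n \<notin> X\<close> assms(8,9) LI_up_beyond \<open>p = 2\<close> \<open>K = {\<kappa>}\<close> \<open>L = {\<mu>}\<close>
          \<open>\<kappa> + \<mu> = 1\<close> in simp_all)
    moreover have "{i..<i + 2 * card K} = {0, 1}" using \<open>i = 0\<close> \<open>card K = 1\<close> by auto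
    ultimately show ?thesis unfolding lower_def by simp
  qed
  then have "fspan (LI_up A m X (i + 2 * card K) ` Pj i X) \<subseteq> fspan lower"
    by (intro fscale.span_minimal fscale.subspace_span) auto
  from fspan_eq_plus_fspan[OF this] show ?thesis
    unfolding lower_def X_def LI_up_def .
qed

end
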